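(* Let $x$ be a real number with $0<x\le 1$. For every integer $k\ge 1$, $$B_{k}(1-x)=(-1)^{k+1}\sum_{n=1}^{k}\left(\frac{1}{n(n+1)}+\frac{x-1}{n^2}\right)\Delta_{n,x}(k),\qquad\text{where}\quad \Delta_{n,x}(k)=\sum_{j=1}^{n}(-1)^{j}\binom{n}{j}\,j\,(j+x-1)^{k-1}.$$
   Context: The Bernoulli polynomials $B_k(x)$ are defined by the generating function $\frac{te^{xt}}{e^{t}-1}=\sum_{k=0}^{\infty}\frac{B_k(x)}{k!}t^k$ for $|t|<2\pi$. Here $0^0$ is interpreted as $1$. *)

theory Defs
  imports Complex_Main "HOL-Computational_Algebra.Formal_Power_Series"
begin

definition bernpoly :: "nat \<Rightarrow> real \<Rightarrow> real" where
  "bernpoly k x = fact k * fps_nth ((fps_X * fps_exp x) / (fps_exp 1 - 1)) k"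

definition Delta :: "nat \<Rightarrow> real \<Rightarrow> nat \<Rightarrow> real" where
  "Delta n x k = (\<Sum>j=1..n. (-1)^j * real (n choose j) * real j * (real j + x - 1)^(k - 1))"

end

theory Submission
  imports Defs
begin

text \<open>
  Put w = 1 - exp(-t), so that t = -ln(1 - w) = sum_{n>=1} w^n / n. The generating function
  F(t) = t exp((1 - x) t) / (exp t - 1) of the B_k(1 - x) satisfies
  exp(x t) w^2 F' = w - t - (x - 1) t w. Replacing t by the partial sums sum_{n<=N} w^n / n,
  which agree with t up to order N + 1, shows that modulo t^N
  F' = -exp(-x t) sum_{n<=N} (1/(n+1) + (x-1)/n) w^(n-1).
  Expanding w^(n-1) binomially, the coefficient of t^(k-1) in exp(-x t) w^(n-1) is
  (-1)^k Delta_{n,x}(k) / (n (k-1)!), and comparing coefficients gives the formula.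
\<close>

unbundle fps_syntax

lemma fps_X_power_dvd_iff:
  "fps_X ^ n dvd (f :: 'a::comm_ring_1 fps) \<longleftrightarrow> (\<forall>k<n. f $ k = 0)"
proof
  assume "fps_X ^ n dvd f"
  then obtain g where "f = fps_X ^ n * g" by (elim dvdE)
  then show "\<forall>k<n. f $ k = 0" by (simp add: fps_X_power_mult_nth)
next
  assume "\<forall>k<n. f $ k = 0"
  then have "f = fps_X ^ n * fps_shift n f"
    by (intro fps_ext) (simp add: fps_X_power_mult_nth)
  then show "fps_X ^ n dvd f" by (rule dvdI)
qed

lemma fps_X_power_Suc_dvd_of_deriv:
  fixes f :: "'a::field_char_0 fps"
  assumes "f $ 0 = 0" and "fps_X ^ n dvd fps_deriv f"
  shows "fps_X ^ Suc n dvd f"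
  unfolding fps_X_power_dvd_iff
proof (intro allI impI)
  fix k assume "k < Suc n"
  then show "f $ k = 0"
  proof (cases k)
    case (Suc j)
    with \<open>k < Suc n\<close> assms(2) have "of_nat (Suc j) * f $ Suc j = 0"
      by (auto simp: fps_X_power_dvd_iff simp del: of_nat_Suc)
    with Suc show ?thesis by (simp del: of_nat_Suc)
  qed (use assms(1) in simp)
qed

definition fps_w :: "'a::field_char_0 fps" where
  "fps_w = 1 - fps_exp (-1)"

lemma fps_deriv_w: "fps_deriv fps_w = 1 - (fps_w :: 'a::field_char_0 fps)"
  by (simp add: fps_w_def fps_eq_iff)

lemma fps_w_nth_0 [simp]: "fps_w $ 0 = (0 :: 'a::field_char_0)"
  by (simp add: fps_w_def)

lemma fps_X_dvd_w: "fps_X dvd (fps_w :: 'a::field_char_0 fps)"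
  by (simp add: fps_X_power_dvd_iff[of 1, simplified])

lemma fps_w_power:
  "fps_w ^ m = (\<Sum>i\<le>m. fps_const (of_nat (m choose i) * (-1) ^ i) * fps_exp (- of_nat i) :: 'a::field_char_0 fps)"
proof -
  have "fps_w ^ m = (- fps_exp (-1) + 1 :: 'a fps) ^ m" by (simp add: fps_w_def)
  also have "\<dots> = (\<Sum>i\<le>m. of_nat (m choose i) * (- fps_exp (-1)) ^ i)"
    by (simp only: binomial_ring power_one mult_1_right)
  also have "\<dots> = (\<Sum>i\<le>m. fps_const (of_nat (m choose i) * (-1) ^ i) * fps_exp (- of_nat i))"
  proof (rule sum.cong[OF refl])
    fix i
    have "(-1 :: 'a fps) = fps_const (-1)"
      by (simp add: fps_eq_iff)
    then have "(- fps_exp (-1) :: 'a fps) ^ i = fps_const ((-1) ^ i) * fps_exp (of_nat i * -1)"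
      by (simp only: power_minus[of "fps_exp (-1)"] fps_const_power fps_exp_power_mult)
    then show "of_nat (m choose i) * (- fps_exp (-1)) ^ i
        = fps_const (of_nat (m choose i) * (-1) ^ i) * (fps_exp (- of_nat i) :: 'a fps)"
      by (simp add: fps_of_nat[symmetric] mult.assoc)
  qed
  finally show ?thesis .
qed

definition log_partial :: "nat \<Rightarrow> 'a::field_char_0 fps" where
  "log_partial N = (\<Sum>n=1..N. fps_const (1 / of_nat n) * fps_w ^ n)"

lemma log_partial_Suc:
  "log_partial (Suc N) = log_partial N + fps_const (1 / of_nat (Suc N)) * fps_w ^ Suc N"
  by (simp add: log_partial_def)

lemma fps_deriv_log_partial: "fps_deriv (log_partial N) = 1 - (fps_w ^ N :: 'a::field_char_0 fps)"
proof (induction N)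
  case 0
  then show ?case by (simp add: log_partial_def)
next
  case (Suc N)
  have "fps_deriv (fps_const (1 / of_nat (Suc N)) * fps_w ^ Suc N)
      = fps_const (1 / of_nat (Suc N) * of_nat (Suc N)) * (1 - fps_w) * (fps_w ^ N :: 'a fps)"
    by (simp only: fps_deriv_mult_const_left fps_deriv_power fps_deriv_w diff_Suc_1
        mult.assoc fps_const_mult[symmetric] fps_of_nat)
  also have "\<dots> = (1 - fps_w) * fps_w ^ N"
    by (simp del: of_nat_Suc)
  finally show ?case by (simp add: log_partial_Suc Suc algebra_simps)
qed

lemma fps_X_power_dvd_log_partial:
  "fps_X ^ Suc N dvd log_partial N - (fps_X :: 'a::field_char_0 fps)"
proof (rule fps_X_power_Suc_dvd_of_deriv)
  show "(log_partial N - fps_X) $ 0 = (0 :: 'a)"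
    by (simp add: log_partial_def fps_sum_nth startsby_zero_power)
  have "fps_X ^ N dvd (fps_w ^ N :: 'a fps)"
    by (rule dvd_power_same[OF fps_X_dvd_w])
  then show "fps_X ^ N dvd fps_deriv (log_partial N - fps_X :: 'a fps)"
    by (simp add: fps_deriv_log_partial)
qed

definition deriv_approx :: "'a::field_char_0 \<Rightarrow> nat \<Rightarrow> 'a fps" where
  "deriv_approx y N = (\<Sum>n=1..N. fps_const (1 / of_nat (n + 1) + y / of_nat n) * fps_w ^ (n - 1))"

lemma w_square_times_deriv_approx:
  "fps_w ^ 2 * deriv_approx y N
     = log_partial (Suc N) - fps_w + fps_const y * fps_w * log_partial N"
proof (induction N)
  case 0
  then show ?case by (simp add: deriv_approx_def log_partial_def)
next
  case (Suc N)
  have "fps_const (1 / of_nat (Suc N + 1) + y / of_nat (Suc N))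
     = fps_const (1 / of_nat (Suc (Suc N))) + fps_const y * fps_const (1 / of_nat (Suc N))"
    by simp
  moreover have "fps_w ^ 2 * deriv_approx y (Suc N) = fps_w ^ 2 * deriv_approx y N
      + fps_const (1 / of_nat (Suc N + 1) + y / of_nat (Suc N)) * fps_w ^ Suc (Suc N)"
    by (simp add: deriv_approx_def algebra_simps power2_eq_square)
  ultimately show ?case
    unfolding Suc log_partial_Suc[of "Suc N"] log_partial_Suc[of N]
    by (simp add: algebra_simps del: fps_const_add fps_const_mult)
qed

definition bernoulli_egf :: "'a::field_char_0 \<Rightarrow> 'a fps" where
  "bernoulli_egf y = fps_X * fps_exp y / (fps_exp 1 - 1)"

lemma bernpoly_conv_egf: "bernpoly k y = fact k * bernoulli_egf y $ k"
  by (simp add: bernpoly_def bernoulli_egf_def)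

lemma exp_minus_one_times_bernoulli_egf:
  "(fps_exp 1 - 1) * bernoulli_egf y = fps_X * (fps_exp y :: 'a::field_char_0 fps)"
proof -
  have "fps_exp 1 - 1 = fps_X * fps_shift 1 (fps_exp 1 - 1 :: 'a fps)"
    by (intro fps_ext) (simp add: fps_X_mult_nth)
  moreover have "fps_shift 1 (fps_exp 1 - 1 :: 'a fps) dvd fps_exp y"
    by (simp add: fps_unit_dvd)
  ultimately have "fps_exp 1 - 1 dvd fps_X * (fps_exp y :: 'a fps)"
    by (metis mult_dvd_mono dvd_refl)
  then show ?thesis
    unfolding bernoulli_egf_def by (rule dvd_mult_div_cancel)
qed

lemma exp_times_w_square_times_deriv_bernoulli_egf:
  fixes y :: "'a::field_char_0"
  shows "fps_exp (1 - y) * fps_w ^ 2 * fps_deriv (bernoulli_egf y)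
           = fps_w - fps_X + fps_const y * fps_X * fps_w"
proof -
  define D :: "'a fps" where "D = fps_exp 1 - 1"
  define F where "F = bernoulli_egf y"
  have DF: "D * F = fps_X * fps_exp y"
    unfolding D_def F_def by (rule exp_minus_one_times_bernoulli_egf)
  have "fps_deriv (D * F) = fps_deriv (fps_X * fps_exp y)"
    by (simp only: DF)
  then have DF': "D * fps_deriv F = (1 + fps_const y * fps_X) * fps_exp y - fps_exp 1 * F"
    by (simp add: D_def algebra_simps)
  have w: "fps_w = fps_exp (-1) * D"
    by (simp add: fps_w_def D_def algebra_simps flip: fps_exp_add_mult)
  have "fps_exp (1 - y) * fps_w ^ 2 * fps_deriv F
      = fps_exp (1 - y) * fps_exp (-1) * fps_exp (-1) * D * (D * fps_deriv F)"
    by (simp add: w power2_eq_square algebra_simps)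
  also have "\<dots> = fps_exp (1 - y) * fps_exp (-1) * fps_exp (-1) * fps_exp y * D * (1 + fps_const y * fps_X)
        - fps_exp (1 - y) * fps_exp (-1) * fps_exp (-1) * fps_exp 1 * (D * F)"
    by (simp only: DF') (simp add: algebra_simps)
  also have "\<dots> = fps_exp (-1) * D * (1 + fps_const y * fps_X) - fps_X"
    by (simp add: DF algebra_simps flip: fps_exp_add_mult)
  finally show ?thesis
    unfolding F_def w by (simp add: algebra_simps)
qed

lemma fps_X_power_dvd_deriv_bernoulli_egf_approx:
  fixes x :: "'a::field_char_0"
  shows "fps_X ^ N dvd fps_deriv (bernoulli_egf (1 - x)) + fps_exp (-x) * deriv_approx (x - 1) N"
    (is "_ dvd ?T")
proof -
  have "fps_exp x * fps_w ^ 2 * ?T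
      = fps_exp (1 - (1 - x)) * fps_w ^ 2 * fps_deriv (bernoulli_egf (1 - x))
        + (fps_exp x * fps_exp (-x)) * (fps_w ^ 2 * deriv_approx (x - 1) N)"
    by (simp add: algebra_simps)
  also have "\<dots> = (log_partial (Suc N) - fps_X) + fps_const (x - 1) * fps_w * (log_partial N - fps_X)"
  proof -
    have "fps_const (1 - x) = - fps_const (x - 1)"
      by simp
    then show ?thesis
      unfolding exp_times_w_square_times_deriv_bernoulli_egf w_square_times_deriv_approx
      by (simp add: algebra_simps del: fps_const_neg fps_const_sub flip: fps_exp_add_mult)
  qed
  finally have eq: "fps_exp x * fps_w ^ 2 * ?T
      = (log_partial (Suc N) - fps_X) + fps_const (x - 1) * fps_w * (log_partial N - fps_X)" .
  have "fps_X * fps_X ^ Suc N dvd fps_w * (log_partial N - fps_X :: 'a fps)"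
    by (intro mult_dvd_mono fps_X_dvd_w fps_X_power_dvd_log_partial)
  then have dvd: "fps_X ^ Suc (Suc N) dvd fps_exp x * fps_w ^ 2 * ?T"
    unfolding eq using fps_X_power_dvd_log_partial[of "Suc N"]
    by (auto simp: mult.assoc intro!: dvd_add dvd_mult)
  define u :: "'a fps" where "u = fps_shift 1 fps_w"
  have w: "fps_w = fps_X * u"
    by (intro fps_ext) (simp add: u_def fps_X_mult_nth)
  have "fps_exp x * fps_w ^ 2 * ?T = fps_X ^ 2 * ((fps_exp x * u ^ 2) * ?T)"
    unfolding w power_mult_distrib by (simp only: ac_simps)
  moreover have "fps_X ^ Suc (Suc N) = fps_X ^ 2 * (fps_X ^ N :: 'a fps)"
    by (simp add: power2_eq_square)
  ultimately have "fps_X ^ 2 * fps_X ^ N dvd fps_X ^ 2 * ((fps_exp x * u ^ 2) * ?T)"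
    using dvd by metis
  then have "fps_X ^ N dvd (fps_exp x * u ^ 2) * ?T"
    by (subst (asm) dvd_times_left_cancel_iff) simp_all
  moreover have "is_unit (fps_exp x * u ^ 2)"
    by (simp add: u_def fps_w_def)
  ultimately show ?thesis
    by (simp add: dvd_mult_unit_iff')
qed

lemma exp_times_w_power_nth:
  fixes x :: "'a::field_char_0"
  shows "(fps_exp (-x) * fps_w ^ m) $ p
           = (\<Sum>i\<le>m. of_nat (m choose i) * (-1) ^ i * (-(x + of_nat i)) ^ p) / fact p"
proof -
  have "fps_exp (-x) * fps_w ^ m
      = (\<Sum>i\<le>m. fps_const (of_nat (m choose i) * (-1) ^ i) * fps_exp (-(x + of_nat i)))"
    unfolding fps_w_power sum_distrib_left
    by (rule sum.cong[OF refl]) (simp add: algebra_simps flip: fps_exp_add_mult)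
  then show ?thesis
    by (simp add: fps_sum_nth sum_divide_distrib)
qed

lemma Delta_Suc:
  "Delta (Suc m) x k = - real (Suc m) * (\<Sum>i\<le>m. (-1) ^ i * real (m choose i) * (real i + x) ^ (k - 1))"
proof -
  have "Delta (Suc m) x k
      = (\<Sum>i\<le>m. (-1) ^ Suc i * real (Suc m choose Suc i) * real (Suc i) * (real (Suc i) + x - 1) ^ (k - 1))"
    unfolding Delta_def atMost_atLeast0 by (subst sum.shift_bounds_cl_Suc_ivl[symmetric]) simp
  also have "\<dots> = (\<Sum>i\<le>m. - real (Suc m) * ((-1) ^ i * real (m choose i) * (real i + x) ^ (k - 1)))"
  proof (rule sum.cong[OF refl])
    fix i
    have "(-1) ^ Suc i * real (Suc m choose Suc i) * real (Suc i) * (real (Suc i) + x - 1) ^ (k - 1)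
        = - ((-1) ^ i * (real (Suc m choose Suc i) * real (Suc i)) * (real i + x) ^ (k - 1))"
      by (simp del: binomial_Suc_Suc)
    also have "real (Suc m choose Suc i) * real (Suc i) = real (Suc m) * real (m choose i)"
      by (metis Suc_times_binomial mult.commute of_nat_mult)
    finally show "(-1) ^ Suc i * real (Suc m choose Suc i) * real (Suc i) * (real (Suc i) + x - 1) ^ (k - 1)
        = - real (Suc m) * ((-1) ^ i * real (m choose i) * (real i + x) ^ (k - 1))"
      by (simp add: algebra_simps del: binomial_Suc_Suc)
  qed
  finally show ?thesis by (simp add: sum_distrib_left)
qed

lemma exp_times_w_power_nth_Delta:
  "(fps_exp (-x) * fps_w ^ m) $ p = (-1) ^ Suc p * Delta (Suc m) x (Suc p) / (real (Suc m) * fact p)"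
proof -
  have "(\<Sum>i\<le>m. real (m choose i) * (-1) ^ i * (-(x + real i)) ^ p)
      = (-1) ^ p * (\<Sum>i\<le>m. (-1) ^ i * real (m choose i) * (real i + x) ^ p)"
    unfolding sum_distrib_left
  proof (rule sum.cong[OF refl])
    fix i
    show "real (m choose i) * (-1) ^ i * (-(x + real i)) ^ p
        = (-1) ^ p * ((-1) ^ i * real (m choose i) * (real i + x) ^ p)"
      unfolding power_minus[of "x + real i" p] by (simp add: algebra_simps)
  qed
  then show ?thesis
    by (simp add: exp_times_w_power_nth Delta_Suc field_simps del: of_nat_Suc)
qed

lemma exp_times_deriv_approx_nth:
  "(fps_exp (-x) * deriv_approx (x - 1) N) $ m
     = (-1) ^ Suc m / fact m
       * (\<Sum>n=1..N. (1 / (real n * (real n + 1)) + (x - 1) / (real n)\<^sup>2) * Delta n x (Suc m))"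
  unfolding deriv_approx_def sum_distrib_left fps_sum_nth
proof (rule sum.cong[OF refl])
  fix n assume "n \<in> {1..N}"
  have "(fps_exp (-x) * (fps_const (1 / real (n + 1) + (x - 1) / real n) * fps_w ^ (n - 1))) $ m
      = (1 / real (n + 1) + (x - 1) / real n) * (fps_exp (-x) * fps_w ^ (n - 1)) $ m"
    by (simp only: mult.left_commute[of "fps_exp (-x)"] fps_mult_left_const_nth)
  also have "(fps_exp (-x) * fps_w ^ (n - 1)) $ m = (-1) ^ Suc m * Delta n x (Suc m) / (real n * fact m)"
    using exp_times_w_power_nth_Delta[of x "n - 1" m] \<open>n \<in> {1..N}\<close> by simp
  also have "(1 / real (n + 1) + (x - 1) / real n) * ((-1) ^ Suc m * Delta n x (Suc m) / (real n * fact m))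
      = (-1) ^ Suc m / fact m * ((1 / real (n + 1) + (x - 1) / real n) / real n * Delta n x (Suc m))"
    by (simp add: divide_inverse inverse_mult_distrib ac_simps)
  also have "(1 / real (n + 1) + (x - 1) / real n) / real n
      = 1 / (real n * (real n + 1)) + (x - 1) / (real n)\<^sup>2"
    unfolding add_divide_distrib divide_divide_eq_left power2_eq_square by (simp add: mult.commute)
  finally show "(fps_exp (-x) * (fps_const (1 / real (n + 1) + (x - 1) / real n) * fps_w ^ (n - 1))) $ m
      = (-1) ^ Suc m / fact m * ((1 / (real n * (real n + 1)) + (x - 1) / (real n)\<^sup>2) * Delta n x (Suc m))" .
qed

theorem mainTheorem3:
  fixes x :: real and k :: nat
  assumes "0 < x" and "x \<le> 1" and "k \<ge> 1"
  shows "bernpoly k (1 - x) =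
    (-1)^(k+1) * (\<Sum>n=1..k. (1 / (real n * (real n + 1)) + (x - 1) / (real n)^2) * Delta n x k)"
proof -
  obtain m where k: "k = Suc m"
    using assms(3) by (cases k) auto
  define F where "F = bernoulli_egf (1 - x)"
  have "(fps_deriv F + fps_exp (-x) * deriv_approx (x - 1) k) $ m = 0"
    using fps_X_power_dvd_deriv_bernoulli_egf_approx[of k x] k
    unfolding F_def fps_X_power_dvd_iff by simp
  then have "real k * F $ k = - (fps_exp (-x) * deriv_approx (x - 1) k) $ m"
    by (simp add: k algebra_simps)
  moreover have "bernpoly k (1 - x) = fact m * (real k * F $ k)"
    by (simp add: bernpoly_conv_egf F_def k)
  ultimately have "bernpoly k (1 - x) = - fact m * (fps_exp (-x) * deriv_approx (x - 1) k) $ m"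
    by simp
  then show ?thesis
    by (simp add: exp_times_deriv_approx_nth k)
qed

end
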